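(* We have $$\sum_{k=0}^\infty\frac{(30k-7)(-2)^k}{\binom{4k}{2k}}=-\frac{3\pi+64}{6}.$$ *)

theory Defs
  imports Complex_Main
begin

end

theory Submission
  imports Defs "HOL-Analysis.Analysis" "HOL-Real_Asymp.Real_Asymp"
begin

(* Since 1 / binomial (4k) (2k) = (4k + 1) * int_0^1 (x(1-x))^(2k) dx (a Beta integral) and
   (30k - 7)(4k + 1) = 120k^2 + 2k - 7, the k-th term is the integral over [0,1] of
   (120k^2 + 2k - 7) t^k with t = -2 x^2 (1-x)^2, and t ranges over [-1/8, 0]. There the power
   series of 120k^2 + 2k - 7 converges uniformly to a rational function gf, with tails of order
   n^2 8^-n, so the sum of the series is int_0^1 gf(t(x)) dx. This integral is evaluated with an
   explicit antiderivative, whose arctangent part contributes the multiple of pi. *)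

lemma abs_divide_le_of_one_le:
  fixes a d :: "'a::linordered_field"
  assumes "1 \<le> d"
  shows "\<bar>a / d\<bar> \<le> \<bar>a\<bar>"
  using assms by (simp add: abs_div divide_le_eq mult_le_cancel_left1)

lemma has_integral_tendsto_uniform_bound:
  fixes f :: "nat \<Rightarrow> real \<Rightarrow> 'a::real_normed_vector"
  assumes "a \<le> b"
    and f: "\<And>n. (f n has_integral s n) {a..b}" and g: "(g has_integral I) {a..b}"
    and bound: "\<And>n x. x \<in> {a..b} \<Longrightarrow> norm (f n x - g x) \<le> M n" and "M \<longlonglongrightarrow> 0"
  shows "s \<longlonglongrightarrow> I"
proof -
  have "(\<lambda>n. s n - I) \<longlonglongrightarrow> 0"
  proof (rule Lim_null_comparison)
    show "\<forall>\<^sub>F n in sequentially. norm (s n - I) \<le> M n * (b - a)"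
    proof (rule always_eventually, rule allI)
      fix n
      have "0 \<le> M n"
        using bound[of a n] \<open>a \<le> b\<close> by (simp add: order_trans[OF norm_ge_zero])
      moreover have "norm (f n x - g x) \<le> M n" if "x \<in> {a..b} - {}" for x
        using bound that by simp
      ultimately show "norm (s n - I) \<le> M n * (b - a)"
        using has_integral_bound_real[OF _ finite.emptyI has_integral_diff[OF f g]] \<open>a \<le> b\<close>
        by simp
    qed
    show "(\<lambda>n. M n * (b - a)) \<longlonglongrightarrow> 0"
      using tendsto_mult_left_zero[OF \<open>M \<longlonglongrightarrow> 0\<close>] .
  qed
  then show ?thesis
    by (simp add: LIM_zero_iff)
qed

lemma has_integral_power_mult_power:
  "((\<lambda>x::real. x ^ m * (1 - x) ^ n) has_integral fact m * fact n / fact (m + n + 1)) {0..1}"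
proof -
  have "((\<lambda>x. x powr (real (m + 1) - 1) * (1 - x) powr (real (n + 1) - 1)) has_integral
          Beta (real (m + 1)) (real (n + 1))) {0..1}"
    by (rule has_integral_Beta_real) auto
  also have "Beta (real (m + 1)) (real (n + 1)) = fact m * fact n / fact (m + n + 1)"
    using Gamma_fact[of m, where 'a=real] Gamma_fact[of n, where 'a=real]
      Gamma_fact[of "m + n + 1", where 'a=real]
    by (simp add: Beta_def add_ac)
  finally show ?thesis
    by (rule has_integral_spike_finite[of "{0, 1}", rotated 2]) (auto simp: powr_realpow)
qed

lemma inverse_central_binomial_has_integral:
  "((\<lambda>x::real. (2 * real n + 1) * (x * (1 - x)) ^ n) has_integral 1 / real ((2 * n) choose n))
     {0..1}"
proof -
  have "fact n * fact (2 * n - n) * ((2 * n) choose n) = fact (2 * n)"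
    by (rule binomial_fact_lemma) simp
  then have binom: "fact n * fact n * real ((2 * n) choose n) = fact (2 * n)"
    by (metis diff_add_inverse2 mult_2 of_nat_fact of_nat_mult)
  have "fact (n + n + 1) = (2 * real n + 1) * fact (2 * n)"
    unfolding mult_2 Suc_eq_plus1[symmetric] fact_Suc by simp
  also have "\<dots> = (2 * real n + 1) * (fact n * fact n * real ((2 * n) choose n))"
    by (simp only: binom)
  finally have "(2 * real n + 1) * (fact n * fact n / fact (n + n + 1)) = 1 / real ((2 * n) choose n)"
    by (simp del: fact_Suc)
  with has_integral_mult_right[OF has_integral_power_mult_power[of n n], of "2 * real n + 1"]
  show ?thesis
    unfolding power_mult_distrib by simp
qed

lemma summand_has_integral:
  "((\<lambda>x. (120 * real k ^ 2 + 2 * real k - 7) * (-2 * (x * (1 - x)) ^ 2) ^ k) has_integral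
     (30 * real k - 7) * (-2) ^ k / real ((4 * k) choose (2 * k))) {0..1}"
proof -
  have integrand: "(30 * real k - 7) * (-2) ^ k * ((2 * real (2 * k) + 1) * u ^ (2 * k))
      = (120 * real k ^ 2 + 2 * real k - 7) * (-2 * u ^ 2) ^ k" for u :: real
  proof -
    have "(-2 * u ^ 2) ^ k = (-2) ^ k * u ^ (2 * k)"
      by (simp only: power_mult power_mult_distrib)
    moreover have "(30 * real k - 7) * (2 * real (2 * k) + 1) = 120 * real k ^ 2 + 2 * real k - 7"
      by (simp add: algebra_simps power2_eq_square)
    ultimately show ?thesis
      by (simp only: mult_ac)
  qed
  have "2 * (2 * k) = 4 * k" by simp
  from has_integral_mult_right[OF inverse_central_binomial_has_integral[of "2 * k"],
      of "(30 * real k - 7) * (-2) ^ k"]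
  show ?thesis
    unfolding integrand \<open>2 * (2 * k) = 4 * k\<close> times_divide_eq_right mult_1_right .
qed

(* gf t is the sum of (120k^2 + 2k - 7) t^k for |t| < 1, and gf_tail t n the sum over k >= n. *)
definition gf :: "real \<Rightarrow> real" where
  "gf t = (240 * t^2 + 122 * t * (1 - t) - 7 * (1 - t)^2) / (1 - t)^3"

definition gf_tail :: "real \<Rightarrow> nat \<Rightarrow> real" where
  "gf_tail t n = (120 * real n ^ 2 / (1 - t) + (2 + 238 * t) * real n / (1 - t)^2 + gf t) * t ^ n"

lemma sum_lessThan_eq_gf_minus_gf_tail:
  assumes "t \<noteq> 1"
  shows "(\<Sum>k<n. (120 * real k ^ 2 + 2 * real k - 7) * t ^ k) = gf t - gf_tail t n"
proof (induction n)
  case 0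
  then show ?case by (simp add: gf_tail_def)
next
  case (Suc n)
  \<comment> \<open>In terms of s = 1 - t the denominators are plain powers of s, which field_simps can clear.\<close>
  define s where "s = 1 - t"
  have "s \<noteq> 0" "t = 1 - s"
    using assms by (simp_all add: s_def)
  have "gf_tail t n - gf_tail t (Suc n) = (120 * real n ^ 2 + 2 * real n - 7) * t ^ n"
    unfolding gf_tail_def gf_def \<open>t = 1 - s\<close> using \<open>s \<noteq> 0\<close>
    by (simp add: field_simps power2_eq_square power3_eq_cube)
  with Suc show ?case by simp
qed

lemma abs_gf_tail_le:
  assumes "-1/8 \<le> t" "t \<le> 0"
  shows "\<bar>gf_tail t n\<bar> \<le> (120 * real n ^ 2 + 32 * real n + 30) * (1/8) ^ n"
proof -
  have "1 \<le> 1 - t" using assms by simp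
  then have "1 \<le> (1 - t)^2" "1 \<le> (1 - t)^3"
    by (simp_all add: one_le_power)
  have quadratic_part: "\<bar>120 * real n ^ 2 / (1 - t)\<bar> \<le> 120 * real n ^ 2"
    using abs_divide_le_of_one_le[OF \<open>1 \<le> 1 - t\<close>, of "120 * real n ^ 2"] by simp
  have linear_part: "\<bar>(2 + 238 * t) * real n / (1 - t)^2\<bar> \<le> 32 * real n"
  proof -
    have "\<bar>2 + 238 * t\<bar> \<le> 32" using assms by simp
    then have "\<bar>(2 + 238 * t) * real n\<bar> \<le> 32 * real n"
      unfolding abs_mult by (simp add: mult_right_mono)
    then show ?thesis
      using abs_divide_le_of_one_le[OF \<open>1 \<le> (1 - t)^2\<close>] order_trans by blast
  qed
  have constant_part: "\<bar>gf t\<bar> \<le> 30"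
  proof -
    have "t^2 \<le> 1/64" "0 \<le> t^2"
      using power_mono[of "-t" "1/8" 2] assms by (simp_all add: power_divide)
    then have "\<bar>111 * t^2 + 136 * t - 7\<bar> \<le> 30"
      using assms unfolding abs_le_iff by linarith
    moreover have "240 * t^2 + 122 * t * (1 - t) - 7 * (1 - t)^2 = 111 * t^2 + 136 * t - 7"
      by (simp add: algebra_simps power2_eq_square)
    ultimately show ?thesis
      unfolding gf_def using abs_divide_le_of_one_le[OF \<open>1 \<le> (1 - t)^3\<close>] order_trans by metis
  qed
  have "\<bar>120 * real n ^ 2 / (1 - t) + (2 + 238 * t) * real n / (1 - t)^2 + gf t\<bar>
      \<le> 120 * real n ^ 2 + 32 * real n + 30"
    using quadratic_part linear_part constant_part
    by (intro order_trans[OF abs_triangle_ineq] order_trans[OF add_right_mono[OF abs_triangle_ineq]] add_mono)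
  moreover have "\<bar>t ^ n\<bar> \<le> (1/8) ^ n"
    unfolding power_abs using assms by (intro power_mono) auto
  ultimately show ?thesis
    unfolding gf_tail_def abs_mult by (rule mult_mono) auto
qed

lemma abs_partial_sum_minus_gf_le:
  assumes "-1/8 \<le> t" "t \<le> 0"
  shows "\<bar>(\<Sum>k<n. (120 * real k ^ 2 + 2 * real k - 7) * t ^ k) - gf t\<bar>
           \<le> (120 * real n ^ 2 + 32 * real n + 30) * (1/8) ^ n"
proof -
  have "t \<noteq> 1" using assms by linarith
  then show ?thesis
    using abs_gf_tail_le[OF assms, of n] by (simp add: sum_lessThan_eq_gf_minus_gf_tail)
qed

lemma square_x_one_minus_x_le:
  fixes x :: real
  assumes "0 \<le> x" "x \<le> 1"
  shows "(x * (1 - x))^2 \<le> 1/16"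
proof -
  have "x * (1 - x) \<le> 1/4"
    using zero_le_power2[of "x - 1/2"] by (simp add: algebra_simps power2_eq_square)
  moreover have "0 \<le> x * (1 - x)"
    using assms by simp
  ultimately show ?thesis
    using power_mono[of "x * (1 - x)" "1/4" 2] by (simp add: power_divide)
qed

definition antideriv :: "real \<Rightarrow> real" where
  "antideriv x =
     (16/3 - 5*x + 61/3*x^2 - 140*x^3 + 590/3*x^4 - 278/3*x^5 + 14*x^6 - 4*x^7)
       / (1 + 2 * (x * (1 - x))^2)^2
     - arctan ((2*x - 1) / (1 + 2 * x * (1 - x)))"

lemma gf_neg_double_square:
  "gf (-2 * u^2) = (444 * u^4 - 272 * u^2 - 7) / (1 + 2 * u^2)^3"
  unfolding gf_def by (simp add: algebra_simps power2_eq_square power3_eq_cube power4_eq_xxxx)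

lemma arctan_quotient_has_derivative:
  assumes "1 + 2 * x * (1 - x) \<noteq> 0"
  shows "((\<lambda>x. arctan ((2*x - 1) / (1 + 2 * x * (1 - x)))) has_real_derivative
           2 * (1 - x * (1 - x)) / (1 + 2 * (x * (1 - x))^2)) (at x)"
proof -
  define d where "d = 1 + 2 * x * (1 - x)"
  define q where "q = 1 + 2 * (x * (1 - x))^2"
  have "d \<noteq> 0" "q > 0"
    using assms by (auto simp: d_def q_def add_pos_nonneg)
  have "((\<lambda>x. (2*x - 1) / (1 + 2 * x * (1 - x))) has_real_derivative 4 * (1 - x * (1 - x)) / d^2) (at x)"
    using \<open>d \<noteq> 0\<close> unfolding d_def
    by (auto intro!: derivative_eq_intros simp: power2_eq_square algebra_simps)
  from DERIV_chain2[OF DERIV_arctan this]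
  have "((\<lambda>x. arctan ((2*x - 1) / (1 + 2 * x * (1 - x)))) has_real_derivative
           inverse (1 + ((2*x - 1) / d)^2) * (4 * (1 - x * (1 - x)) / d^2)) (at x)"
    unfolding d_def .
  also have "1 + ((2*x - 1) / d)^2 = 2 * q / d^2"
    using \<open>d \<noteq> 0\<close> unfolding q_def d_def by (simp add: field_simps) algebra
  also have "inverse (2 * q / d^2) * (4 * (1 - x * (1 - x)) / d^2) = 2 * (1 - x * (1 - x)) / q"
    using \<open>d \<noteq> 0\<close> \<open>q > 0\<close> by (simp add: field_simps)
  finally show ?thesis unfolding q_def .
qed

lemma antideriv_has_derivative:
  assumes "x \<in> {0..1}"
  shows "(antideriv has_real_derivative gf (-2 * (x * (1 - x))^2)) (at x)"
proof -
  define u where "u = x * (1 - x)"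
  define q where "q = 1 + 2 * u^2"
  define p where "p = 16/3 - 5*x + 61/3*x^2 - 140*x^3 + 590/3*x^4 - 278/3*x^5 + 14*x^6 - 4*x^7"
  define p' where "p' = - 5 + 122/3*x - 420*x^2 + 2360/3*x^3 - 1390/3*x^4 + 84*x^5 - 28*x^6"
  have "q > 0"
    by (simp add: q_def add_pos_nonneg)
  have "0 \<le> u"
    using assms by (simp add: u_def)
  then have "1 + 2 * x * (1 - x) \<noteq> 0"
    unfolding u_def by (simp add: mult.assoc add_pos_nonneg)
  have numerator: "((\<lambda>x. 16/3 - 5*x + 61/3*x^2 - 140*x^3 + 590/3*x^4 - 278/3*x^5 + 14*x^6 - 4*x^7)
      has_real_derivative p') (at x)"
    unfolding p'_def by (auto intro!: derivative_eq_intros)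
  have denominator: "((\<lambda>x. (1 + 2 * (x * (1 - x))^2)^2) has_real_derivative 8 * q * u * (1 - 2*x)) (at x)"
    by (auto intro!: derivative_eq_intros simp: q_def u_def)
  have "(1 + 2 * (x * (1 - x))^2)^2 \<noteq> 0"
    using \<open>q > 0\<close> by (simp add: q_def u_def)
  from DERIV_diff[OF DERIV_divide[OF numerator denominator this]
      arctan_quotient_has_derivative[OF \<open>1 + 2 * x * (1 - x) \<noteq> 0\<close>]]
  have "(antideriv has_real_derivative
      (p' * q^2 - p * (8 * q * u * (1 - 2*x))) / (q^2 * q^2) - 2 * (1 - u) / q) (at x)"
    unfolding antideriv_def p_def q_def u_def .
  also have "(p' * q^2 - p * (8 * q * u * (1 - 2*x))) / (q^2 * q^2) - 2 * (1 - u) / q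
      = (p' * q - 8 * u * (1 - 2*x) * p - 2 * (1 - u) * q^2) / q^3"
    using \<open>q > 0\<close> by (simp add: field_simps power2_eq_square power3_eq_cube)
  also have "p' * q - 8 * u * (1 - 2*x) * p - 2 * (1 - u) * q^2 = 444 * u^4 - 272 * u^2 - 7"
    unfolding p_def p'_def q_def u_def by algebra
  finally show ?thesis
    unfolding gf_neg_double_square q_def u_def .
qed

lemma gf_has_integral:
  "((\<lambda>x. gf (-2 * (x * (1 - x))^2)) has_integral - (3 * pi + 64) / 6) {0..1}"
proof -
  have "(antideriv has_vector_derivative gf (-2 * (x * (1 - x))^2)) (at x within {0..1})"
    if "x \<in> {0..1}" for x
    unfolding has_real_derivative_iff_has_vector_derivative[symmetric]
    by (rule has_field_derivative_at_within[OF antideriv_has_derivative[OF that]])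
  from fundamental_theorem_of_calculus[OF zero_le_one this]
  have "((\<lambda>x. gf (-2 * (x * (1 - x))^2)) has_integral antideriv 1 - antideriv 0) {0..1}" .
  moreover have "antideriv 1 - antideriv 0 = - (3 * pi + 64) / 6"
    by (simp add: antideriv_def arctan_one arctan_minus)
  ultimately show ?thesis by simp
qed

theorem corollary1p2:
  shows "(\<lambda>k::nat. (30 * real k - 7) * (-2) ^ k / real ((4 * k) choose (2 * k)))
           sums (- (3 * pi + 64) / 6)"
  unfolding sums_def
proof (rule has_integral_tendsto_uniform_bound)
  let ?t = "\<lambda>x::real. -2 * (x * (1 - x))^2"
  show "((\<lambda>x. \<Sum>k<n. (120 * real k ^ 2 + 2 * real k - 7) * ?t x ^ k) has_integral
      (\<Sum>k<n. (30 * real k - 7) * (-2) ^ k / real ((4 * k) choose (2 * k)))) {0..1}" for n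
    by (intro has_integral_sum summand_has_integral) auto
  show "((\<lambda>x. gf (?t x)) has_integral - (3 * pi + 64) / 6) {0..1}"
    by (rule gf_has_integral)
  show "norm ((\<Sum>k<n. (120 * real k ^ 2 + 2 * real k - 7) * ?t x ^ k) - gf (?t x))
      \<le> (120 * real n ^ 2 + 32 * real n + 30) * (1/8) ^ n" if "x \<in> {0..1}" for n x
    unfolding real_norm_def
    by (rule abs_partial_sum_minus_gf_le) (use square_x_one_minus_x_le[of x] that in auto)
  show "(\<lambda>n. (120 * real n ^ 2 + 32 * real n + 30) * (1/8::real) ^ n) \<longlonglongrightarrow> 0"
    by real_asymp
qed simp

end
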